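(* Let $T$ be a decomposition tree of a distance-hereditary graph $G$ and let $v$ be an internal node of $T$. Then $|\hat\gamma_k(v)-\hat\gamma_{k+1}(v)|=1$ for every integer $0\le k<|\hat{TS}(v)|$.
   Context: All graphs are finite, simple, undirected. For a graph $H$ and $S\subseteq V(H)$, $N_H[S]$ is $S$ together with all vertices adjacent to a vertex of $S$, and $H[S]$ is the induced subgraph. Graphs carry a "twin set": a single-vertex graph on $x$ has twin set $\{x\}$. For vertex-disjoint graphs $G_l,G_r$ with twin sets $TS(G_l),TS(G_r)$: the true twin operation $G_l\otimes G_r$ has vertex set $V(G_l)\cup V(G_r)$, edge set $E(G_l)\cup E(G_r)\cup\{uw: u\in TS(G_l), w\in TS(G_r)\}$ and twin set $TS(G_l)\cup TS(G_r)$; the false twin operation $G_l\odot G_r$ has vertex set $V(G_l)\cup V(G_r)$, edge set $E(G_l)\cup E(G_r)$, twin set $TS(G_l)\cup TS(G_r)$; the attachment operation $G_l\oplus G_r$ has the same vertex and edge sets as $G_l\otimes G_r$ and twin set $TS(G_l)$. A decomposition tree $T$ of $G$ is a rooted binary tree whose leaves are in bijection with $V(G)$, each internal node having a left and a right child and a label in $\{\otimes,\odot,\oplus\}$; for each node $v$ define $\hat G(v)$ and $\hat{TS}(v)$ recursively: for a leaf $x$, the single-vertex graph on $x$ with twin set $\{x\}$; for an internal node $v$ with label $\circ$ and children $v_l,v_r$, $\hat G(v)=\hat G(v_l)\circ\hat G(v_r)$ with the corresponding twin set; one requires $\hat G(\text{root})=G$. Then $\hat G(v)$ is the subgraph of $G$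 induced by the set $\hat V(v)$ of leaves below $v$. For a node $v$ and $0\le k\le|\hat{TS}(v)|$, call $S\subseteq\hat V(v)$ $k$-feasible if $\hat V(v)\setminus\hat{TS}(v)\subseteq N_{\hat G(v)}[S]$ and there is $X\subseteq S\cap\hat{TS}(v)$ with $|X|=k$ such that $\hat G(v)[S\setminus X]$ has a perfect matching. $\hat\gamma_k(v)$ is the minimum size of a $k$-feasible set. *)

theory Defs
  imports Main
begin

definition simple_graph :: "'a set \<Rightarrow> 'a set set \<Rightarrow> bool" where
  "simple_graph V E \<longleftrightarrow> finite V \<and> (\<forall>e\<in>E. \<exists>u w. e = {u, w} \<and> u \<noteq> w \<and> u \<in> V \<and> w \<in> V)"

definition walk_in :: "'a set set \<Rightarrow> 'a set \<Rightarrow> 'a list \<Rightarrow> bool" where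
  "walk_in E A xs \<longleftrightarrow> xs \<noteq> [] \<and> set xs \<subseteq> A \<and> (\<forall>(a, b) \<in> set (zip xs (tl xs)). {a, b} \<in> E)"

definition connected_in :: "'a set set \<Rightarrow> 'a set \<Rightarrow> bool" where
  "connected_in E A \<longleftrightarrow>
     (\<forall>u\<in>A. \<forall>w\<in>A. \<exists>xs. walk_in E A xs \<and> hd xs = u \<and> last xs = w)"

definition dist_in :: "'a set set \<Rightarrow> 'a set \<Rightarrow> 'a \<Rightarrow> 'a \<Rightarrow> nat" where
  "dist_in E A u w = (LEAST n. \<exists>xs. walk_in E A xs \<and> hd xs = u \<and> last xs = w \<and> length xs = Suc n)"

definition distance_hereditary :: "'a set \<Rightarrow> 'a set set \<Rightarrow> bool" where
  "distance_hereditary V E \<longleftrightarrow> simple_graph V E \<and>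
     (\<forall>A \<subseteq> V. connected_in E A \<longrightarrow> (\<forall>u\<in>A. \<forall>w\<in>A. dist_in E A u w = dist_in E V u w))"

datatype op_label = TrueTwin | FalseTwin | Attach

datatype 'a dtree = Leaf 'a | Node op_label "'a dtree" "'a dtree"

fun tverts :: "'a dtree \<Rightarrow> 'a set" where
  "tverts (Leaf x) = {x}"
| "tverts (Node _ l r) = tverts l \<union> tverts r"

fun tts :: "'a dtree \<Rightarrow> 'a set" where
  "tts (Leaf x) = {x}"
| "tts (Node TrueTwin l r) = tts l \<union> tts r"
| "tts (Node FalseTwin l r) = tts l \<union> tts r"
| "tts (Node Attach l r) = tts l"

fun tedges :: "'a dtree \<Rightarrow> 'a set set" where
  "tedges (Leaf x) = {}"
| "tedges (Node TrueTwin l r) = tedges l \<union> tedges r \<union> {{u, w} | u w. u \<in> tts l \<and> w \<in> tts r}"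
| "tedges (Node FalseTwin l r) = tedges l \<union> tedges r"
| "tedges (Node Attach l r) = tedges l \<union> tedges r \<union> {{u, w} | u w. u \<in> tts l \<and> w \<in> tts r}"

fun leaves :: "'a dtree \<Rightarrow> 'a list" where
  "leaves (Leaf x) = [x]"
| "leaves (Node _ l r) = leaves l @ leaves r"

text \<open>Nodes of the tree, each represented by the subtree rooted at it (well defined since
  leaves are pairwise distinct).\<close>
fun subtrees :: "'a dtree \<Rightarrow> 'a dtree set" where
  "subtrees (Leaf x) = {Leaf x}"
| "subtrees (Node c l r) = insert (Node c l r) (subtrees l \<union> subtrees r)"

fun is_internal :: "'a dtree \<Rightarrow> bool" where
  "is_internal (Leaf _) = False"
| "is_internal (Node _ _ _) = True"

definition decomposition_tree :: "'a dtree \<Rightarrow> 'a set \<Rightarrow> 'a set set \<Rightarrow> bool" where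
  "decomposition_tree T V E \<longleftrightarrow> distinct (leaves T) \<and> tverts T = V \<and> tedges T = E"

definition closed_nbhd :: "'a set set \<Rightarrow> 'a set \<Rightarrow> 'a set" where
  "closed_nbhd E S = S \<union> {w. \<exists>u\<in>S. {u, w} \<in> E}"

definition has_perfect_matching :: "'a set set \<Rightarrow> 'a set \<Rightarrow> bool" where
  "has_perfect_matching E A \<longleftrightarrow>
     (\<exists>M \<subseteq> E. (\<forall>e\<in>M. e \<subseteq> A) \<and> (\<forall>e\<in>M. \<forall>f\<in>M. e \<noteq> f \<longrightarrow> e \<inter> f = {}) \<and> \<Union>M = A)"

definition k_feasible :: "'a dtree \<Rightarrow> nat \<Rightarrow> 'a set \<Rightarrow> bool" where
  "k_feasible v k S \<longleftrightarrow> S \<subseteq> tverts v \<and>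
     tverts v - tts v \<subseteq> closed_nbhd (tedges v) S \<and>
     (\<exists>X. X \<subseteq> S \<inter> tts v \<and> card X = k \<and> has_perfect_matching (tedges v) (S - X))"

definition gamma_hat :: "'a dtree \<Rightarrow> nat \<Rightarrow> nat" where
  "gamma_hat v k = (LEAST n. \<exists>S. k_feasible v k S \<and> card S = n)"

end

theory Submission
  imports Defs
begin

text \<open>If X \<subseteq> S is the set of k unmatched twin-set vertices of a k-feasible set S, then
  S - X is covered by disjoint edges, so |S| has the parity of k. Conversely, a k-feasible set
  can be turned into a (k+1)- or (k-1)-feasible one by changing a single vertex: moving a
  vertex into or out of X leaves exactly one vertex u of S - X unmatched, and u is either
  matched to a fresh neighbour outside S or deleted from S. Hence consecutive values of
  \<open>gamma_hat\<close> differ by at most one and have different parities. Only the simplicity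
  of G enters (matching edges have two ends).\<close>

lemma has_perfect_matching_empty: "has_perfect_matching E {}"
  unfolding has_perfect_matching_def by auto

lemma has_perfect_matching_subset_Union: "has_perfect_matching E A \<Longrightarrow> A \<subseteq> \<Union>E"
  unfolding has_perfect_matching_def by blast

lemma has_perfect_matching_insert_edge:
  assumes "has_perfect_matching E A" "{u, w} \<in> E" "u \<notin> A" "w \<notin> A"
  shows "has_perfect_matching E (A \<union> {u, w})"
proof -
  obtain M where "M \<subseteq> E" "\<forall>e\<in>M. e \<subseteq> A" "\<forall>e\<in>M. \<forall>f\<in>M. e \<noteq> f \<longrightarrow> e \<inter> f = {}" "\<Union>M = A"
    using assms(1) unfolding has_perfect_matching_def by blast
  with assms(2-4) show ?thesis
    unfolding has_perfect_matching_def by (intro exI[of _ "insert {u, w} M"]) blast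
qed

lemma has_perfect_matching_remove_edge:
  assumes "has_perfect_matching E A" "\<forall>e\<in>E. card e = 2" "t \<in> A"
  obtains u where "u \<in> A" "u \<noteq> t" "{t, u} \<in> E" "has_perfect_matching E (A - {t, u})"
proof -
  obtain M where M: "M \<subseteq> E" "\<forall>e\<in>M. e \<subseteq> A" "\<forall>e\<in>M. \<forall>f\<in>M. e \<noteq> f \<longrightarrow> e \<inter> f = {}" "\<Union>M = A"
    using assms(1) unfolding has_perfect_matching_def by blast
  then obtain e where e: "e \<in> M" "t \<in> e" using assms(3) by blast
  then have "card e = 2" using M(1) assms(2) by blast
  then obtain u where u: "e = {t, u}" "u \<noteq> t" using e(2) by (auto simp: card_2_iff)
  have "has_perfect_matching E (A - e)"
    unfolding has_perfect_matching_def using M e(1) by (intro exI[of _ "M - {e}"]) blast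
  then show thesis using that u M e(1) by blast
qed

lemma even_card_perfect_matching:
  assumes "\<forall>e\<in>E. card e = 2" "has_perfect_matching E A"
  shows "even (card A)"
proof -
  obtain M where M: "M \<subseteq> E" "\<forall>e\<in>M. \<forall>f\<in>M. e \<noteq> f \<longrightarrow> e \<inter> f = {}" "\<Union>M = A"
    using assms(2) unfolding has_perfect_matching_def by blast
  have card_2: "card e = 2" if "e \<in> M" for e using that M(1) assms(1) by blast
  have "card A = sum card M"
    unfolding M(3)[symmetric]
    by (rule card_Union_disjoint) (use M(2) card_2 in \<open>auto simp: pairwise_def disjnt_def card_2_iff\<close>)
  also have "\<dots> = 2 * card M" using card_2 by simp
  finally show ?thesis by simp
qed

lemma matched_dominating_set_exists:
  assumes "finite U" "\<forall>u\<in>U. \<exists>w. {u, w} \<in> E"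
  shows "\<exists>S. has_perfect_matching E S \<and> U \<subseteq> closed_nbhd E S"
  using assms
proof (induction U rule: finite_induct)
  case empty
  then show ?case using has_perfect_matching_empty by blast
next
  case (insert u U)
  then obtain S where S: "has_perfect_matching E S" "U \<subseteq> closed_nbhd E S" by auto
  show ?case
  proof (cases "u \<in> closed_nbhd E S")
    case True
    then show ?thesis using S by blast
  next
    case False
    obtain w where w: "{u, w} \<in> E" using insert.prems by blast
    with False have "u \<notin> S" "w \<notin> S"
      unfolding closed_nbhd_def by (auto simp: insert_commute)
    then have "has_perfect_matching E (S \<union> {u, w})"
      using has_perfect_matching_insert_edge[OF S(1) w] by blast
    moreover have "insert u U \<subseteq> closed_nbhd E (S \<union> {u, w})"
      using S(2) unfolding closed_nbhd_def by blast
    ultimately show ?thesis by blast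
  qed
qed

lemma closed_nbhd_mono: "S \<subseteq> S' \<Longrightarrow> closed_nbhd E S \<subseteq> closed_nbhd E S'"
  unfolding closed_nbhd_def by blast

lemma subset_closed_nbhd_Diff:
  assumes "D \<subseteq> closed_nbhd E S" "\<forall>w. {u, w} \<in> E \<longrightarrow> w \<in> S"
    and "u \<notin> D \<or> (\<exists>t\<in>S - {u}. {t, u} \<in> E)"
  shows "D \<subseteq> closed_nbhd E (S - {u})"
proof
  fix y assume y: "y \<in> D"
  show "y \<in> closed_nbhd E (S - {u})"
  proof (cases "y \<in> S")
    case True
    then show ?thesis using y assms(3) unfolding closed_nbhd_def by auto
  next
    case False
    then obtain z where "z \<in> S" "{z, y} \<in> E" using y assms(1) unfolding closed_nbhd_def by blast
    moreover have "z \<noteq> u" using False \<open>{z, y} \<in> E\<close> assms(2) by blast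
    ultimately show ?thesis unfolding closed_nbhd_def by blast
  qed
qed

lemma tts_subset_tverts: "tts v \<subseteq> tverts v"
  by (induction v rule: tts.induct) auto

lemma finite_tverts: "finite (tverts v)"
  by (induction v) auto

lemma finite_tts: "finite (tts v)"
  using finite_subset[OF tts_subset_tverts finite_tverts] .

lemma tts_nonempty: "tts v \<noteq> {}"
  by (induction v rule: tts.induct) auto

lemma tedges_subset_tverts: "e \<in> tedges v \<Longrightarrow> e \<subseteq> tverts v"
  by (induction v rule: tedges.induct) (use tts_subset_tverts in fastforce)+

lemma tedges_children: "tedges l \<union> tedges r \<subseteq> tedges (Node c l r)"
  by (cases c) auto

lemma tedges_subtrees: "v \<in> subtrees T \<Longrightarrow> tedges v \<subseteq> tedges T"
  by (induction T) (use tedges_children in fastforce)+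

lemma non_twin_has_neighbour: "x \<in> tverts v - tts v \<Longrightarrow> \<exists>w. {x, w} \<in> tedges v"
proof (induction v)
  case (Leaf y)
  then show ?case by simp
next
  case (Node c l r)
  show ?case
  proof (cases "c = Attach \<and> x \<in> tts r")
    case True
    obtain a where "a \<in> tts l" using tts_nonempty[of l] by blast
    with True have "{x, a} \<in> tedges (Node c l r)" by (auto simp: insert_commute)
    then show ?thesis by blast
  next
    case False
    then have "x \<in> tverts l - tts l \<or> x \<in> tverts r - tts r"
      using Node.prems by (cases c) auto
    then show ?thesis using Node.IH tedges_children by blast
  qed
qed

lemma k_feasibleI:
  assumes "tverts v - tts v \<subseteq> closed_nbhd (tedges v) S" "X \<subseteq> S \<inter> tts v" "card X = k"
    and "has_perfect_matching (tedges v) (S - X)"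
  shows "k_feasible v k S"
proof -
  have "S - X \<subseteq> \<Union>(tedges v)" by (rule has_perfect_matching_subset_Union[OF assms(4)])
  also have "\<dots> \<subseteq> tverts v" using tedges_subset_tverts by blast
  finally have "S - X \<subseteq> tverts v" .
  moreover have "X \<subseteq> tverts v" using assms(2) tts_subset_tverts[of v] by blast
  ultimately have "S \<subseteq> tverts v" by blast
  then show ?thesis unfolding k_feasible_def using assms by blast
qed

lemma k_feasibleE:
  assumes "k_feasible v k S"
  obtains X where "tverts v - tts v \<subseteq> closed_nbhd (tedges v) S" "X \<subseteq> S \<inter> tts v" "card X = k"
    "has_perfect_matching (tedges v) (S - X)"
  using assms unfolding k_feasible_def by auto

lemma k_feasible_0_exists: "\<exists>S. k_feasible v 0 S"
proof -
  have "\<forall>x\<in>tverts v - tts v. \<exists>w. {x, w} \<in> tedges v" by (intro ballI non_twin_has_neighbour)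
  then obtain S where pm: "has_perfect_matching (tedges v) S"
    and dom: "tverts v - tts v \<subseteq> closed_nbhd (tedges v) S"
    using matched_dominating_set_exists[OF finite_Diff[OF finite_tverts]] by blast
  have "k_feasible v 0 S" using k_feasibleI[OF dom, of "{}"] pm by simp
  then show ?thesis by blast
qed

text \<open>The last hypothesis keeps u dominated if it has to be deleted from S.\<close>

lemma k_feasible_repair_unmatched:
  assumes dom: "tverts v - tts v \<subseteq> closed_nbhd (tedges v) S"
    and X: "X \<subseteq> S \<inter> tts v" "card X = k"
    and u: "u \<in> S - X" and pm: "has_perfect_matching (tedges v) (S - X - {u})"
    and u_covered: "u \<in> tts v \<or> (\<exists>t\<in>S - {u}. {t, u} \<in> tedges v)"
  shows "\<exists>S'. k_feasible v k S' \<and> card S' \<le> card S + 1"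
proof (cases "\<exists>w. {u, w} \<in> tedges v \<and> w \<notin> S")
  case True
  then obtain w where w: "{u, w} \<in> tedges v" "w \<notin> S" by blast
  have "has_perfect_matching (tedges v) (S - X - {u} \<union> {u, w})"
    using has_perfect_matching_insert_edge[OF pm w(1)] w(2) by blast
  moreover have "S - X - {u} \<union> {u, w} = insert w S - X" using u w(2) X(1) by blast
  ultimately have pm': "has_perfect_matching (tedges v) (insert w S - X)" by simp
  have dom': "tverts v - tts v \<subseteq> closed_nbhd (tedges v) (insert w S)"
    using dom closed_nbhd_mono[of S "insert w S"] by blast
  have "X \<subseteq> insert w S \<inter> tts v" using X(1) by blast
  then have "k_feasible v k (insert w S)" by (rule k_feasibleI[OF dom' _ X(2) pm'])
  moreover have "card (insert w S) \<le> card S + 1" by (cases "finite S") (auto simp: card_insert_if)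
  ultimately show ?thesis by blast
next
  case False
  then have dom': "tverts v - tts v \<subseteq> closed_nbhd (tedges v) (S - {u})"
    using subset_closed_nbhd_Diff[OF dom] u_covered by blast
  have "S - {u} - X = S - X - {u}" by blast
  then have pm': "has_perfect_matching (tedges v) (S - {u} - X)" using pm by simp
  have "X \<subseteq> (S - {u}) \<inter> tts v" using X(1) u by blast
  then have "k_feasible v k (S - {u})" by (rule k_feasibleI[OF dom' _ X(2) pm'])
  then show ?thesis using card_Diff1_le[of S u] by auto
qed

lemma k_feasible_of_Suc:
  assumes "k_feasible v (Suc k) S"
  shows "\<exists>S'. k_feasible v k S' \<and> card S' \<le> card S + 1"
proof -
  obtain X where dom: "tverts v - tts v \<subseteq> closed_nbhd (tedges v) S"
    and X: "X \<subseteq> S \<inter> tts v" "card X = Suc k" and pm: "has_perfect_matching (tedges v) (S - X)"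
    using assms by (rule k_feasibleE)
  have "X \<noteq> {}" using X(2) by auto
  then obtain x where x: "x \<in> X" by blast
  have "finite X" using X(1) finite_subset[OF _ finite_tts[of v]] by blast
  then have card_X': "card (X - {x}) = k" using X(2) x by simp
  have "S - (X - {x}) - {x} = S - X" using x by blast
  then have pm': "has_perfect_matching (tedges v) (S - (X - {x}) - {x})" using pm by simp
  have "X - {x} \<subseteq> S \<inter> tts v" "x \<in> S - (X - {x})" "x \<in> tts v" using X(1) x by auto
  then show ?thesis using k_feasible_repair_unmatched[OF dom _ card_X' _ pm'] by blast
qed

lemma gamma_hat_le: "k_feasible v k S \<Longrightarrow> gamma_hat v k \<le> card S"
  unfolding gamma_hat_def by (rule Least_le) blast

lemma gamma_hat_attained: "k_feasible v k S \<Longrightarrow> \<exists>S'. k_feasible v k S' \<and> card S' = gamma_hat v k"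
  unfolding gamma_hat_def by (rule LeastI_ex) blast

context
  fixes v :: "'a dtree"
  assumes tedges_card_2: "\<forall>e\<in>tedges v. card e = 2"
begin

lemma even_card_k_feasible:
  assumes "k_feasible v k S"
  shows "even (card S + k)"
proof -
  obtain X where X: "X \<subseteq> S \<inter> tts v" "card X = k" and pm: "has_perfect_matching (tedges v) (S - X)"
    using assms by (rule k_feasibleE)
  have "X \<subseteq> S" using X(1) by simp
  have "finite S" using assms finite_subset[OF _ finite_tverts[of v]] unfolding k_feasible_def by blast
  moreover have "finite X" using finite_subset[OF \<open>X \<subseteq> S\<close>] \<open>finite S\<close> .
  ultimately have "card S = card (S - X) + k"
    using \<open>X \<subseteq> S\<close> X(2) card_Diff_subset[of X S] card_mono[of S X] by linarith
  then show ?thesis using even_card_perfect_matching[OF tedges_card_2 pm] by simp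
qed

lemma k_feasible_Suc:
  assumes "k_feasible v k S" "k < card (tts v)"
  shows "\<exists>S'. k_feasible v (Suc k) S' \<and> card S' \<le> card S + 1"
proof -
  obtain X where dom: "tverts v - tts v \<subseteq> closed_nbhd (tedges v) S"
    and X: "X \<subseteq> S \<inter> tts v" "card X = k" and pm: "has_perfect_matching (tedges v) (S - X)"
    using assms(1) by (rule k_feasibleE)
  have fin_X: "finite X" using X(1) finite_subset[OF _ finite_tts[of v]] by blast
  show ?thesis
  proof (cases "tts v \<subseteq> S")
    case False
    then obtain t where t: "t \<in> tts v" "t \<notin> S" by blast
    have "t \<notin> X" using X(1) t(2) by blast
    then have card_X': "card (insert t X) = Suc k" using fin_X X(2) by simp
    have "insert t S - insert t X = S - X" using t(2) by blast
    then have pm': "has_perfect_matching (tedges v) (insert t S - insert t X)" using pm by simp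
    have dom': "tverts v - tts v \<subseteq> closed_nbhd (tedges v) (insert t S)"
      using dom closed_nbhd_mono[of S "insert t S"] by blast
    have "insert t X \<subseteq> insert t S \<inter> tts v" using X(1) t(1) by blast
    then have "k_feasible v (Suc k) (insert t S)" by (rule k_feasibleI[OF dom' _ card_X' pm'])
    moreover have "card (insert t S) \<le> card S + 1" by (cases "finite S") (auto simp: card_insert_if)
    ultimately show ?thesis by blast
  next
    case True
    have "\<not> tts v \<subseteq> X"
    proof
      assume "tts v \<subseteq> X"
      then have "card (tts v) \<le> card X" by (rule card_mono[OF fin_X])
      then show False using X(2) assms(2) by simp
    qed
    then obtain t where t: "t \<in> S - X" "t \<in> tts v" using True by blast
    obtain u where u: "u \<in> S - X" "u \<noteq> t" "{t, u} \<in> tedges v"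
      and pm': "has_perfect_matching (tedges v) (S - X - {t, u})"
      by (rule has_perfect_matching_remove_edge[OF pm tedges_card_2 t(1)])
    have "S - insert t X - {u} = S - X - {t, u}" by blast
    then have pm'': "has_perfect_matching (tedges v) (S - insert t X - {u})" using pm' by simp
    have card_X': "card (insert t X) = Suc k" using fin_X X(2) t(1) by simp
    have "insert t X \<subseteq> S \<inter> tts v" "u \<in> S - insert t X" "t \<in> S - {u}"
      using X(1) t u by auto
    then show ?thesis using k_feasible_repair_unmatched[OF dom _ card_X' _ pm''] u(3) by blast
  qed
qed

lemma k_feasible_exists: "k \<le> card (tts v) \<Longrightarrow> \<exists>S. k_feasible v k S"
proof (induction k)
  case 0
  show ?case by (rule k_feasible_0_exists)
next
  case (Suc k)
  then obtain S where "k_feasible v k S" by auto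
  moreover have "k < card (tts v)" using Suc.prems by simp
  ultimately show ?case using k_feasible_Suc by blast
qed

lemma gamma_hat_Suc_le:
  assumes "k < card (tts v)"
  shows "gamma_hat v (Suc k) \<le> gamma_hat v k + 1"
proof -
  obtain S where S: "k_feasible v k S" "card S = gamma_hat v k"
    using k_feasible_exists gamma_hat_attained assms by (meson less_imp_le)
  then obtain S' where "k_feasible v (Suc k) S'" "card S' \<le> card S + 1"
    using k_feasible_Suc assms by blast
  then show ?thesis using gamma_hat_le[of v "Suc k" S'] S(2) by linarith
qed

lemma gamma_hat_le_Suc:
  assumes "k < card (tts v)"
  shows "gamma_hat v k \<le> gamma_hat v (Suc k) + 1"
proof -
  obtain S where S: "k_feasible v (Suc k) S" "card S = gamma_hat v (Suc k)"
    using k_feasible_exists gamma_hat_attained assms by (meson Suc_leI)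
  then obtain S' where "k_feasible v k S'" "card S' \<le> card S + 1"
    using k_feasible_of_Suc by blast
  then show ?thesis using gamma_hat_le[of v k S'] S(2) by linarith
qed

lemma even_gamma_hat_add:
  assumes "k \<le> card (tts v)"
  shows "even (gamma_hat v k + k)"
proof -
  obtain S where "k_feasible v k S" "card S = gamma_hat v k"
    using k_feasible_exists[OF assms] gamma_hat_attained by blast
  then show ?thesis using even_card_k_feasible by metis
qed

end

theorem lemma4:
  fixes T :: "'a dtree" and V :: "'a set" and E :: "'a set set" and v :: "'a dtree" and k :: nat
  assumes "distance_hereditary V E"
    and "decomposition_tree T V E"
    and "v \<in> subtrees T" and "is_internal v"
    and "k < card (tts v)"
  shows "\<bar>int (gamma_hat v k) - int (gamma_hat v (k + 1))\<bar> = 1"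
proof -
  have "tedges v \<subseteq> E"
    using tedges_subtrees[OF assms(3)] assms(2) unfolding decomposition_tree_def by simp
  moreover have "\<forall>e\<in>E. card e = 2"
    using assms(1) unfolding distance_hereditary_def simple_graph_def by auto
  ultimately have edges: "\<forall>e\<in>tedges v. card e = 2" by blast
  have "gamma_hat v (k + 1) \<le> gamma_hat v k + 1" "gamma_hat v k \<le> gamma_hat v (k + 1) + 1"
    using gamma_hat_Suc_le[OF edges assms(5)] gamma_hat_le_Suc[OF edges assms(5)] by simp_all
  moreover have "even (gamma_hat v k + k)" "even (gamma_hat v (k + 1) + (k + 1))"
    using even_gamma_hat_add[OF edges] assms(5) by simp_all
  ultimately have "gamma_hat v k = gamma_hat v (k + 1) + 1 \<or> gamma_hat v (k + 1) = gamma_hat v k + 1"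
    by presburger
  then show ?thesis by auto
qed

end
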